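(* Let $\epsilon\in[0,1]$, let $\theta$ be any softmax parameter, and let $\hat\xi=(\hat\xi_1,\dots,\hat\xi_n)$ be the $\epsilon$-exploration policy of $\xi^\theta$, i.e. $\hat\xi_i(a_i\mid s_i)=(1-\epsilon)\xi_i^{\theta_i}(a_i\mid s_i)+\epsilon/|\mathcal A_i|$ for all $i,s_i,a_i$. Then for every agent $i$, $$\max_{s\in\mathcal S,\,a_i\in\mathcal A_i}\left|\overline Q_i^{\hat\xi}(s,a_i)-\overline Q_i^{\xi^\theta}(s,a_i)\right|\le\frac{6n\epsilon}{(1-\gamma)^2}.$$
   Context: Networked Markov game. There are $n$ agents $\mathcal N=\{1,\dots,n\}$ placed at the nodes of an undirected graph $\mathcal G=(\mathcal N,\mathcal E)$ with graph distance $\mathrm{dist}$. For an integer $\kappa\ge0$, $N_i^\kappa=\{j\in\mathcal N:\mathrm{dist}(i,j)\le\kappa\}$ (so $i\in N_i^\kappa$), $\mathcal N_i=N_i^1$, $-N_i^\kappa=\mathcal N\setminus N_i^\kappa$, and $n(\kappa)=\max_i|N_i^\kappa|$. Agent $i$ has a finite local state space $\mathcal S_i$ and a finite local action space $\mathcal A_i$; $\mathcal S=\prod_i\mathcal S_i$, $\mathcal A=\prod_i\mathcal A_i$, and for $I\subseteq\mathcal N$ we write $s_I,a_I,\mathcal S_I,\mathcal A_I$ for the joint states/actions/spaces of the agents in $I$ (the subscript $-i$ means $\mathcal N\setminus\{i\}$). The dynamics are $\mathcal P(s'\mid s,a)=\prod_i\mathcal P_i(s_i'\mid s_{\mathcal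 N_i},a_i)$, the initial distribution is $\mu\in\Delta(\mathcal S)$, and $\gamma\in(0,1)$ is a discount factor. Each agent has a reward $r_i:\mathcal S\times\mathcal A\to[0,1]$ depending only on $(s_{N_i^{\kappa_r}},a_{N_i^{\kappa_r}})$ for a fixed integer $\kappa_r\ge0$. A joint policy $\xi=(\xi_1,\dots,\xi_n)$ acts by $\xi(a\mid s)=\prod_i\xi_i(a_i\mid s_i)$. For a joint policy $\xi$: $Q_i^\xi(s,a)=\sum_{t\ge0}\gamma^t\mathbb E_\xi[r_i(s(t),a(t))\mid s(0)=s,a(0)=a]$; $\overline Q_i^\xi(s,a_i)=\mathbb E_{a_{-i}\sim\xi_{-i}(\cdot\mid s_{-i})}Q_i^\xi(s,a_i,a_{-i})$. Softmax policies: for $\theta_i\in\mathbb R^{|\mathcal S_i||\mathcal A_i|}$, $\xi_i^{\theta_i}(a_i\mid s_i)=\exp(\theta_{i,s_i,a_i})/\sum_{a_i'\in\mathcal A_i}\exp(\theta_{i,s_i,a_i'})$; $\xi^\theta=(\xi_1^{\theta_1},\dots,\xi_n^{\theta_n})$. *)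

theory Defs
  imports "HOL-Analysis.Analysis"
begin

definition agents :: "nat \<Rightarrow> nat set" where
  "agents n = {0..<n}"

definition edge_rel :: "nat \<Rightarrow> (nat \<Rightarrow> nat \<Rightarrow> bool) \<Rightarrow> nat \<Rightarrow> nat \<Rightarrow> bool" where
  "edge_rel n E x y \<longleftrightarrow> x < n \<and> y < n \<and> E x y"

definition nbhd :: "nat \<Rightarrow> (nat \<Rightarrow> nat \<Rightarrow> bool) \<Rightarrow> nat \<Rightarrow> nat \<Rightarrow> nat set" where
  "nbhd n E k i = {j \<in> agents n. \<exists>m\<le>k. (edge_rel n E ^^ m) i j}"

definition jS :: "nat \<Rightarrow> (nat \<Rightarrow> 's set) \<Rightarrow> (nat \<Rightarrow> 's) set" where
  "jS n S = PiE (agents n) S"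

definition jA :: "nat \<Rightarrow> (nat \<Rightarrow> 'a set) \<Rightarrow> (nat \<Rightarrow> 'a) set" where
  "jA n A = PiE (agents n) A"

definition trans :: "nat \<Rightarrow> (nat \<Rightarrow> (nat \<Rightarrow> 's) \<Rightarrow> 'a \<Rightarrow> 's \<Rightarrow> real)
    \<Rightarrow> (nat \<Rightarrow> 's) \<Rightarrow> (nat \<Rightarrow> 'a) \<Rightarrow> (nat \<Rightarrow> 's) \<Rightarrow> real" where
  "trans n P s a s' = (\<Prod>i\<in>agents n. P i s (a i) (s' i))"

definition jpol :: "nat \<Rightarrow> (nat \<Rightarrow> 's \<Rightarrow> 'a \<Rightarrow> real) \<Rightarrow> (nat \<Rightarrow> 's) \<Rightarrow> (nat \<Rightarrow> 'a) \<Rightarrow> real" where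
  "jpol n \<xi> s a = (\<Prod>i\<in>agents n. \<xi> i (s i) (a i))"

text \<open>occ n S A P xi t s0 a0 s a = Pr_xi[(s(t),a(t)) = (s,a) | s(0)=s0, a(0)=a0].\<close>
primrec occ :: "nat \<Rightarrow> (nat \<Rightarrow> 's set) \<Rightarrow> (nat \<Rightarrow> 'a set)
    \<Rightarrow> (nat \<Rightarrow> (nat \<Rightarrow> 's) \<Rightarrow> 'a \<Rightarrow> 's \<Rightarrow> real) \<Rightarrow> (nat \<Rightarrow> 's \<Rightarrow> 'a \<Rightarrow> real)
    \<Rightarrow> nat \<Rightarrow> (nat \<Rightarrow> 's) \<Rightarrow> (nat \<Rightarrow> 'a) \<Rightarrow> (nat \<Rightarrow> 's) \<Rightarrow> (nat \<Rightarrow> 'a) \<Rightarrow> real" where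
  "occ n S A P \<xi> 0 s0 a0 s a = (if s = s0 \<and> a = a0 then 1 else 0)"
| "occ n S A P \<xi> (Suc t) s0 a0 s' a' =
     (\<Sum>s\<in>jS n S. \<Sum>a\<in>jA n A. occ n S A P \<xi> t s0 a0 s a * trans n P s a s' * jpol n \<xi> s' a')"

definition Qfun :: "nat \<Rightarrow> (nat \<Rightarrow> 's set) \<Rightarrow> (nat \<Rightarrow> 'a set)
    \<Rightarrow> (nat \<Rightarrow> (nat \<Rightarrow> 's) \<Rightarrow> 'a \<Rightarrow> 's \<Rightarrow> real)
    \<Rightarrow> (nat \<Rightarrow> (nat \<Rightarrow> 's) \<Rightarrow> (nat \<Rightarrow> 'a) \<Rightarrow> real) \<Rightarrow> real
    \<Rightarrow> (nat \<Rightarrow> 's \<Rightarrow> 'a \<Rightarrow> real) \<Rightarrow> nat \<Rightarrow> (nat \<Rightarrow> 's) \<Rightarrow> (nat \<Rightarrow> 'a) \<Rightarrow> real" where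
  "Qfun n S A P r \<gamma> \<xi> i s0 a0 =
     (\<Sum>t. \<gamma> ^ t * (\<Sum>s\<in>jS n S. \<Sum>a\<in>jA n A. occ n S A P \<xi> t s0 a0 s a * r i s a))"

definition Qbar :: "nat \<Rightarrow> (nat \<Rightarrow> 's set) \<Rightarrow> (nat \<Rightarrow> 'a set)
    \<Rightarrow> (nat \<Rightarrow> (nat \<Rightarrow> 's) \<Rightarrow> 'a \<Rightarrow> 's \<Rightarrow> real)
    \<Rightarrow> (nat \<Rightarrow> (nat \<Rightarrow> 's) \<Rightarrow> (nat \<Rightarrow> 'a) \<Rightarrow> real) \<Rightarrow> real
    \<Rightarrow> (nat \<Rightarrow> 's \<Rightarrow> 'a \<Rightarrow> real) \<Rightarrow> nat \<Rightarrow> (nat \<Rightarrow> 's) \<Rightarrow> 'a \<Rightarrow> real" where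
  "Qbar n S A P r \<gamma> \<xi> i s ai =
     (\<Sum>a\<in>{a \<in> jA n A. a i = ai}.
        (\<Prod>j\<in>agents n - {i}. \<xi> j (s j) (a j)) * Qfun n S A P r \<gamma> \<xi> i s a)"

definition softmax :: "(nat \<Rightarrow> 'a set) \<Rightarrow> (nat \<Rightarrow> 's \<Rightarrow> 'a \<Rightarrow> real) \<Rightarrow> nat \<Rightarrow> 's \<Rightarrow> 'a \<Rightarrow> real" where
  "softmax A \<theta> i si ai = exp (\<theta> i si ai) / (\<Sum>b\<in>A i. exp (\<theta> i si b))"

definition explore :: "(nat \<Rightarrow> 'a set) \<Rightarrow> real \<Rightarrow> (nat \<Rightarrow> 's \<Rightarrow> 'a \<Rightarrow> real) \<Rightarrow> nat \<Rightarrow> 's \<Rightarrow> 'a \<Rightarrow> real" where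
  "explore A \<epsilon> \<xi> i si ai = (1 - \<epsilon>) * \<xi> i si ai + \<epsilon> / real (card (A i))"

end

theory Submission
  imports Defs
begin

text \<open>The \<epsilon>-exploration policy is within total variation 2\<epsilon> of the softmax policy at every
  agent and state, so the two joint (product) policies are within 2n\<epsilon> of each other.  Coupling
  the two processes step by step, this gap accumulates at most linearly in the distribution of
  (s(t), a(t)), so the expected rewards at time t differ by at most 2n\<epsilon>(t+1) and the Q-functions
  by sum_t \<gamma>^t 2n\<epsilon>(t+1) = 2n\<epsilon>/(1-\<gamma>)^2.  Averaging over the other agents' actions costs a
  further 2n\<epsilon>/(1-\<gamma>), since Q is bounded by 1/(1-\<gamma>).\<close>

lemma abs_diff_mult_le:
  fixes x1 x2 y1 y2 :: real
  assumes "0 \<le> y1" "0 \<le> x2"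
  shows "\<bar>x1 * y1 - x2 * y2\<bar> \<le> \<bar>x1 - x2\<bar> * y1 + x2 * \<bar>y1 - y2\<bar>"
proof -
  have "x1 * y1 - x2 * y2 = (x1 - x2) * y1 + x2 * (y1 - y2)"
    by (simp add: algebra_simps)
  then show ?thesis
    using assms by (metis abs_mult abs_of_nonneg abs_triangle_ineq)
qed

lemma sum_PiE_insert:
  assumes "x \<notin> I"
  shows "(\<Sum>g\<in>PiE (insert x I) B. F g) = (\<Sum>y\<in>B x. \<Sum>g\<in>PiE I B. F (g(x:=y)))"
proof -
  have "(\<Sum>g\<in>PiE (insert x I) B. F g) = (\<Sum>(y, g)\<in>B x \<times> PiE I B. F (g(x:=y)))"
    unfolding PiE_insert_eq by (subst sum.reindex[OF inj_combinator[OF assms]]) (simp add: o_def split_def)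
  then show ?thesis
    by (simp add: sum.cartesian_product)
qed

lemma sum_abs_diff_prod_PiE_le:
  fixes p q :: "'i \<Rightarrow> 'b \<Rightarrow> real"
  assumes "finite I" "\<And>j. j \<in> I \<Longrightarrow> finite (B j)"
    and "\<And>j b. j \<in> I \<Longrightarrow> b \<in> B j \<Longrightarrow> 0 \<le> p j b" "\<And>j b. j \<in> I \<Longrightarrow> b \<in> B j \<Longrightarrow> 0 \<le> q j b"
    and "\<And>j. j \<in> I \<Longrightarrow> sum (p j) (B j) = 1" "\<And>j. j \<in> I \<Longrightarrow> sum (q j) (B j) = 1"
  shows "(\<Sum>g\<in>PiE I B. \<bar>(\<Prod>j\<in>I. p j (g j)) - (\<Prod>j\<in>I. q j (g j))\<bar>)
           \<le> (\<Sum>j\<in>I. \<Sum>b\<in>B j. \<bar>p j b - q j b\<bar>)"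
  using assms
proof (induction I rule: finite_induct)
  case empty
  then show ?case by simp
next
  case (insert x I)
  define p' where "p' g = (\<Prod>j\<in>I. p j (g j))" for g
  define q' where "q' g = (\<Prod>j\<in>I. q j (g j))" for g
  have sum_p': "(\<Sum>g\<in>PiE I B. p' g) = 1"
    unfolding p'_def using insert by (subst prod_sum_PiE[symmetric]) (auto intro!: prod.neutral)
  have p'_nonneg: "0 \<le> p' g" if "g \<in> PiE I B" for g
    unfolding p'_def using insert that by (auto intro!: prod_nonneg simp: PiE_iff)
  have IH: "(\<Sum>g\<in>PiE I B. \<bar>p' g - q' g\<bar>) \<le> (\<Sum>j\<in>I. \<Sum>b\<in>B j. \<bar>p j b - q j b\<bar>)"
    unfolding p'_def q'_def using insert by (intro insert.IH) auto
  have split_factor: "(\<Prod>j\<in>insert x I. f j ((g(x:=y)) j)) = f x y * (\<Prod>j\<in>I. f j (g j))"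
    for f :: "'i \<Rightarrow> 'b \<Rightarrow> real" and g y
    using insert.hyps by (auto intro!: prod.cong)
  have "(\<Sum>g\<in>PiE (insert x I) B. \<bar>(\<Prod>j\<in>insert x I. p j (g j)) - (\<Prod>j\<in>insert x I. q j (g j))\<bar>)
      = (\<Sum>y\<in>B x. \<Sum>g\<in>PiE I B. \<bar>q' g * q x y - p' g * p x y\<bar>)"
    unfolding sum_PiE_insert[OF insert.hyps(2)] split_factor p'_def q'_def
    by (simp add: abs_minus_commute mult.commute)
  also have "\<dots> \<le> (\<Sum>y\<in>B x. \<Sum>g\<in>PiE I B. \<bar>q' g - p' g\<bar> * q x y + p' g * \<bar>q x y - p x y\<bar>)"
    using insert.prems p'_nonneg by (intro sum_mono abs_diff_mult_le) auto
  also have "\<dots> = (\<Sum>y\<in>B x. q x y * (\<Sum>g\<in>PiE I B. \<bar>p' g - q' g\<bar>) + \<bar>p x y - q x y\<bar> * (\<Sum>g\<in>PiE I B. p' g))"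
    by (simp add: sum.distrib sum_distrib_left sum_distrib_right abs_minus_commute mult.commute)
  also have "\<dots> = (\<Sum>y\<in>B x. q x y) * (\<Sum>g\<in>PiE I B. \<bar>p' g - q' g\<bar>) + (\<Sum>y\<in>B x. \<bar>p x y - q x y\<bar>)"
    by (simp add: sum.distrib sum_distrib_right sum_p')
  also have "\<dots> \<le> (\<Sum>j\<in>insert x I. \<Sum>b\<in>B j. \<bar>p j b - q j b\<bar>)"
    using insert IH by simp
  finally show ?case .
qed

lemma abs_diff_weighted_sum_le:
  fixes w1 w2 f1 f2 :: "'b \<Rightarrow> real"
  assumes "\<And>x. x \<in> X \<Longrightarrow> 0 \<le> w1 x" "sum w1 X = 1"
    and "\<And>x. x \<in> X \<Longrightarrow> \<bar>f1 x - f2 x\<bar> \<le> D"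
    and "\<And>x. x \<in> X \<Longrightarrow> 0 \<le> f2 x \<and> f2 x \<le> M"
  shows "\<bar>(\<Sum>x\<in>X. w1 x * f1 x) - (\<Sum>x\<in>X. w2 x * f2 x)\<bar> \<le> D + M * (\<Sum>x\<in>X. \<bar>w1 x - w2 x\<bar>)"
proof -
  have "\<bar>(\<Sum>x\<in>X. w1 x * f1 x) - (\<Sum>x\<in>X. w2 x * f2 x)\<bar> \<le> (\<Sum>x\<in>X. \<bar>f1 x * w1 x - f2 x * w2 x\<bar>)"
    by (simp add: mult.commute flip: sum_subtractf)
  also have "\<dots> \<le> (\<Sum>x\<in>X. \<bar>f1 x - f2 x\<bar> * w1 x + f2 x * \<bar>w1 x - w2 x\<bar>)"
    using assms by (intro sum_mono abs_diff_mult_le) auto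
  also have "\<dots> \<le> (\<Sum>x\<in>X. D * w1 x + M * \<bar>w1 x - w2 x\<bar>)"
    using assms by (intro sum_mono add_mono mult_right_mono) auto
  also have "\<dots> = D + M * (\<Sum>x\<in>X. \<bar>w1 x - w2 x\<bar>)"
    using assms by (simp add: sum.distrib flip: sum_distrib_left)
  finally show ?thesis .
qed

lemma discounted_sum_bounds:
  fixes \<gamma> :: real
  assumes "0 \<le> \<gamma>" "\<gamma> < 1" "\<And>t. 0 \<le> f t \<and> f t \<le> 1"
  shows "summable (\<lambda>t. \<gamma>^t * f t)" "0 \<le> (\<Sum>t. \<gamma>^t * f t)" "(\<Sum>t. \<gamma>^t * f t) \<le> 1 / (1 - \<gamma>)"
proof -
  have geom: "summable (\<lambda>t. \<gamma>^t)"
    using assms by (intro summable_geometric) auto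
  have le: "\<gamma>^t * f t \<le> \<gamma>^t" for t
    using assms by (simp add: mult_left_le)
  show sm: "summable (\<lambda>t. \<gamma>^t * f t)"
    by (rule summable_comparison_test'[OF geom, of 0]) (use assms le in auto)
  show "0 \<le> (\<Sum>t. \<gamma>^t * f t)"
    using assms by (intro suminf_nonneg sm) auto
  have "(\<Sum>t. \<gamma>^t * f t) \<le> (\<Sum>t. \<gamma>^t)"
    by (intro suminf_le le sm geom)
  also have "\<dots> = 1 / (1 - \<gamma>)"
    using assms by (simp add: suminf_geometric)
  finally show "(\<Sum>t. \<gamma>^t * f t) \<le> 1 / (1 - \<gamma>)" .
qed

lemma discounted_sum_diff_le:
  fixes \<gamma> :: real
  assumes "0 \<le> \<gamma>" "\<gamma> < 1" "summable (\<lambda>t. \<gamma>^t * f t)" "summable (\<lambda>t. \<gamma>^t * g t)"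
    and "\<And>t. \<bar>f t - g t\<bar> \<le> real (Suc t) * K"
  shows "\<bar>(\<Sum>t. \<gamma>^t * f t) - (\<Sum>t. \<gamma>^t * g t)\<bar> \<le> K / (1 - \<gamma>)^2"
proof -
  have bound: "(\<lambda>t. K * (real (Suc t) * \<gamma>^t)) sums (K * (1 / (1 - \<gamma>)^2))"
    using assms by (intro sums_mult geometric_deriv_sums) auto
  have term_le: "\<bar>\<gamma>^t * f t - \<gamma>^t * g t\<bar> \<le> K * (real (Suc t) * \<gamma>^t)" for t
  proof -
    have "\<bar>\<gamma>^t * f t - \<gamma>^t * g t\<bar> = \<gamma>^t * \<bar>f t - g t\<bar>"
      using assms(1) by (simp add: abs_mult flip: right_diff_distrib)
    also have "\<dots> \<le> \<gamma>^t * (real (Suc t) * K)"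
      using assms by (intro mult_left_mono) auto
    finally show ?thesis by (simp add: mult_ac)
  qed
  have "\<bar>\<Sum>t. \<gamma>^t * f t - \<gamma>^t * g t\<bar> \<le> K * (1 / (1 - \<gamma>)^2)"
    using norm_suminf_le[of "\<lambda>t. \<gamma>^t * f t - \<gamma>^t * g t", OF _ sums_summable[OF bound]]
      term_le sums_unique[OF bound] by simp
  then show ?thesis
    using suminf_diff[OF assms(3,4)] by simp
qed

lemma sum_swap_pairs:
  "(\<Sum>x\<in>X. \<Sum>y\<in>Y. \<Sum>u\<in>U. \<Sum>v\<in>V. f x y u v) = (\<Sum>u\<in>U. \<Sum>v\<in>V. \<Sum>x\<in>X. \<Sum>y\<in>Y. f x y u v)"
proof -
  have "(\<Sum>x\<in>X. \<Sum>y\<in>Y. \<Sum>u\<in>U. \<Sum>v\<in>V. f x y u v) = (\<Sum>x\<in>X. \<Sum>u\<in>U. \<Sum>v\<in>V. \<Sum>y\<in>Y. f x y u v)"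
    by (simp add: sum.swap[of _ Y] sum.swap[of _ Y V])
  also have "\<dots> = (\<Sum>u\<in>U. \<Sum>v\<in>V. \<Sum>x\<in>X. \<Sum>y\<in>Y. f x y u v)"
    by (simp add: sum.swap[of _ X] sum.swap[of _ X V])
  finally show ?thesis .
qed

locale finite_markov_game =
  fixes n :: nat and S :: "nat \<Rightarrow> 's set" and A :: "nat \<Rightarrow> 'a set"
    and P :: "nat \<Rightarrow> (nat \<Rightarrow> 's) \<Rightarrow> 'a \<Rightarrow> 's \<Rightarrow> real"
  assumes S_fin: "\<And>j. j < n \<Longrightarrow> finite (S j) \<and> S j \<noteq> {}"
    and A_fin: "\<And>j. j < n \<Longrightarrow> finite (A j) \<and> A j \<noteq> {}"
    and P_nonneg: "\<And>j s b x. j < n \<Longrightarrow> s \<in> jS n S \<Longrightarrow> b \<in> A j \<Longrightarrow> x \<in> S j \<Longrightarrow> P j s b x \<ge> 0"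
    and P_sum: "\<And>j s b. j < n \<Longrightarrow> s \<in> jS n S \<Longrightarrow> b \<in> A j \<Longrightarrow> (\<Sum>x\<in>S j. P j s b x) = 1"
begin

definition policy :: "(nat \<Rightarrow> 's \<Rightarrow> 'a \<Rightarrow> real) \<Rightarrow> bool" where
  "policy \<xi> \<longleftrightarrow> (\<forall>j<n. \<forall>x. (\<forall>b\<in>A j. 0 \<le> \<xi> j x b) \<and> sum (\<xi> j x) (A j) = 1)"

definition occ_step ::
    "(nat \<Rightarrow> 's \<Rightarrow> 'a \<Rightarrow> real) \<Rightarrow> ((nat \<Rightarrow> 's) \<Rightarrow> (nat \<Rightarrow> 'a) \<Rightarrow> real) \<Rightarrow> (nat \<Rightarrow> 's) \<Rightarrow> (nat \<Rightarrow> 'a) \<Rightarrow> real"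
  where "occ_step \<xi> \<mu> s' a' = (\<Sum>s\<in>jS n S. \<Sum>a\<in>jA n A. \<mu> s a * trans n P s a s' * jpol n \<xi> s' a')"

lemma occ_Suc: "occ n S A P \<xi> (Suc t) s0 a0 = occ_step \<xi> (occ n S A P \<xi> t s0 a0)"
  by (simp add: occ_step_def fun_eq_iff)

lemma finite_jS: "finite (jS n S)"
  unfolding jS_def agents_def using S_fin by (intro finite_PiE) auto

lemma finite_jA: "finite (jA n A)"
  unfolding jA_def agents_def using A_fin by (intro finite_PiE) auto

lemma jpol_nonneg: "policy \<xi> \<Longrightarrow> a \<in> jA n A \<Longrightarrow> 0 \<le> jpol n \<xi> s a"
  unfolding jpol_def policy_def jA_def agents_def by (auto intro!: prod_nonneg simp: PiE_iff)

lemma sum_jpol: "policy \<xi> \<Longrightarrow> (\<Sum>a\<in>jA n A. jpol n \<xi> s a) = 1"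
  unfolding jpol_def jA_def policy_def using A_fin
  by (subst prod_sum_PiE[symmetric]) (auto simp: agents_def intro!: prod.neutral)

lemma trans_nonneg: "s \<in> jS n S \<Longrightarrow> a \<in> jA n A \<Longrightarrow> s' \<in> jS n S \<Longrightarrow> 0 \<le> trans n P s a s'"
  unfolding trans_def using P_nonneg
  by (auto intro!: prod_nonneg simp: PiE_iff jS_def jA_def agents_def)

lemma sum_trans:
  assumes "s \<in> jS n S" "a \<in> jA n A"
  shows "(\<Sum>s'\<in>jS n S. trans n P s a s') = 1"
proof -
  have "(\<Sum>s'\<in>jS n S. trans n P s a s') = (\<Prod>j\<in>agents n. \<Sum>x\<in>S j. P j s (a j) x)"
    unfolding trans_def jS_def using S_fin by (subst prod_sum_PiE) (auto simp: agents_def)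
  also have "\<dots> = 1"
    using assms P_sum by (auto simp: agents_def jA_def PiE_iff intro!: prod.neutral)
  finally show ?thesis .
qed

lemma occ_step_nonneg:
  assumes "policy \<xi>" "\<And>s a. s \<in> jS n S \<Longrightarrow> a \<in> jA n A \<Longrightarrow> 0 \<le> \<mu> s a" "s' \<in> jS n S" "a' \<in> jA n A"
  shows "0 \<le> occ_step \<xi> \<mu> s' a'"
  unfolding occ_step_def using assms
  by (auto intro!: sum_nonneg mult_nonneg_nonneg trans_nonneg jpol_nonneg)

lemma sum_occ_step:
  assumes "policy \<xi>"
  shows "(\<Sum>s'\<in>jS n S. \<Sum>a'\<in>jA n A. occ_step \<xi> \<mu> s' a') = (\<Sum>s\<in>jS n S. \<Sum>a\<in>jA n A. \<mu> s a)"
proof -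
  have "(\<Sum>s'\<in>jS n S. \<Sum>a'\<in>jA n A. occ_step \<xi> \<mu> s' a')
      = (\<Sum>s\<in>jS n S. \<Sum>a\<in>jA n A. \<mu> s a * (\<Sum>s'\<in>jS n S. trans n P s a s' * (\<Sum>a'\<in>jA n A. jpol n \<xi> s' a')))"
    unfolding occ_step_def by (subst sum_swap_pairs) (simp add: sum_distrib_left mult.assoc)
  also have "\<dots> = (\<Sum>s\<in>jS n S. \<Sum>a\<in>jA n A. \<mu> s a)"
    using assms by (simp add: sum_jpol sum_trans)
  finally show ?thesis .
qed

lemma sum_abs_diff_occ_step_le:
  assumes \<xi>1: "policy \<xi>1"
    and \<mu>2: "\<And>s a. s \<in> jS n S \<Longrightarrow> a \<in> jA n A \<Longrightarrow> 0 \<le> \<mu>2 s a" "(\<Sum>s\<in>jS n S. \<Sum>a\<in>jA n A. \<mu>2 s a) = 1"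
    and C: "\<And>s. (\<Sum>a\<in>jA n A. \<bar>jpol n \<xi>1 s a - jpol n \<xi>2 s a\<bar>) \<le> C"
  shows "(\<Sum>s'\<in>jS n S. \<Sum>a'\<in>jA n A. \<bar>occ_step \<xi>1 \<mu>1 s' a' - occ_step \<xi>2 \<mu>2 s' a'\<bar>)
           \<le> (\<Sum>s\<in>jS n S. \<Sum>a\<in>jA n A. \<bar>\<mu>1 s a - \<mu>2 s a\<bar>) + C"
proof -
  let ?T = "trans n P" and ?q1 = "jpol n \<xi>1" and ?q2 = "jpol n \<xi>2"
  have pointwise: "\<bar>occ_step \<xi>1 \<mu>1 s' a' - occ_step \<xi>2 \<mu>2 s' a'\<bar>
      \<le> (\<Sum>s\<in>jS n S. \<Sum>a\<in>jA n A.
            \<bar>\<mu>1 s a - \<mu>2 s a\<bar> * (?T s a s' * ?q1 s' a') + \<mu>2 s a * (?T s a s' * \<bar>?q1 s' a' - ?q2 s' a'\<bar>))"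
    if s': "s' \<in> jS n S" and a': "a' \<in> jA n A" for s' a'
  proof -
    have "\<bar>occ_step \<xi>1 \<mu>1 s' a' - occ_step \<xi>2 \<mu>2 s' a'\<bar>
        \<le> (\<Sum>s\<in>jS n S. \<Sum>a\<in>jA n A. \<bar>\<mu>1 s a * (?T s a s' * ?q1 s' a') - \<mu>2 s a * (?T s a s' * ?q2 s' a')\<bar>)"
      unfolding occ_step_def
      by (simp add: mult.assoc flip: sum_subtractf) (rule order.trans[OF sum_abs sum_mono[OF sum_abs]])
    also have "\<dots> \<le> (\<Sum>s\<in>jS n S. \<Sum>a\<in>jA n A.
        \<bar>\<mu>1 s a - \<mu>2 s a\<bar> * (?T s a s' * ?q1 s' a') + \<mu>2 s a * \<bar>?T s a s' * ?q1 s' a' - ?T s a s' * ?q2 s' a'\<bar>)"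
      using \<xi>1 \<mu>2 s' a' by (intro sum_mono abs_diff_mult_le) (auto intro!: mult_nonneg_nonneg trans_nonneg jpol_nonneg)
    finally show ?thesis
      using s' a' by (simp add: abs_mult trans_nonneg flip: right_diff_distrib)
  qed
  have "(\<Sum>s'\<in>jS n S. \<Sum>a'\<in>jA n A. \<bar>occ_step \<xi>1 \<mu>1 s' a' - occ_step \<xi>2 \<mu>2 s' a'\<bar>)
      \<le> (\<Sum>s'\<in>jS n S. \<Sum>a'\<in>jA n A. \<Sum>s\<in>jS n S. \<Sum>a\<in>jA n A.
            \<bar>\<mu>1 s a - \<mu>2 s a\<bar> * (?T s a s' * ?q1 s' a') + \<mu>2 s a * (?T s a s' * \<bar>?q1 s' a' - ?q2 s' a'\<bar>))"
    by (intro sum_mono pointwise)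
  also have "\<dots> = (\<Sum>s\<in>jS n S. \<Sum>a\<in>jA n A. \<bar>\<mu>1 s a - \<mu>2 s a\<bar> * (\<Sum>s'\<in>jS n S. ?T s a s' * (\<Sum>a'\<in>jA n A. ?q1 s' a'))
      + \<mu>2 s a * (\<Sum>s'\<in>jS n S. ?T s a s' * (\<Sum>a'\<in>jA n A. \<bar>?q1 s' a' - ?q2 s' a'\<bar>)))"
    by (subst sum_swap_pairs) (simp add: sum.distrib sum_distrib_left)
  also have "\<dots> \<le> (\<Sum>s\<in>jS n S. \<Sum>a\<in>jA n A. \<bar>\<mu>1 s a - \<mu>2 s a\<bar> + \<mu>2 s a * C)"
  proof (intro sum_mono)
    fix s a assume s: "s \<in> jS n S" and a: "a \<in> jA n A"
    have "(\<Sum>s'\<in>jS n S. ?T s a s' * (\<Sum>a'\<in>jA n A. \<bar>?q1 s' a' - ?q2 s' a'\<bar>)) \<le> (\<Sum>s'\<in>jS n S. ?T s a s' * C)"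
      using s a C by (intro sum_mono mult_left_mono) (auto simp: trans_nonneg)
    then show "\<bar>\<mu>1 s a - \<mu>2 s a\<bar> * (\<Sum>s'\<in>jS n S. ?T s a s' * (\<Sum>a'\<in>jA n A. ?q1 s' a'))
        + \<mu>2 s a * (\<Sum>s'\<in>jS n S. ?T s a s' * (\<Sum>a'\<in>jA n A. \<bar>?q1 s' a' - ?q2 s' a'\<bar>))
        \<le> \<bar>\<mu>1 s a - \<mu>2 s a\<bar> + \<mu>2 s a * C"
      using \<xi>1 s a \<mu>2(1)[OF s a] by (simp add: sum_jpol sum_trans mult_left_mono flip: sum_distrib_right)
  qed
  also have "\<dots> = (\<Sum>s\<in>jS n S. \<Sum>a\<in>jA n A. \<bar>\<mu>1 s a - \<mu>2 s a\<bar>) + C"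
    using \<mu>2(2) by (simp add: sum.distrib mult.commute flip: sum_distrib_left)
  finally show ?thesis .
qed

lemma occ_nonneg:
  assumes "policy \<xi>" "s \<in> jS n S" "a \<in> jA n A"
  shows "0 \<le> occ n S A P \<xi> t s0 a0 s a"
  using assms(2,3) by (induction t arbitrary: s a) (auto simp: occ_Suc intro!: occ_step_nonneg assms(1))

lemma sum_occ:
  assumes "policy \<xi>" "s0 \<in> jS n S" "a0 \<in> jA n A"
  shows "(\<Sum>s\<in>jS n S. \<Sum>a\<in>jA n A. occ n S A P \<xi> t s0 a0 s a) = 1"
proof (induction t)
  case 0
  have "(\<Sum>a\<in>jA n A. if s = s0 \<and> a = a0 then 1 else 0) = (if s = s0 then 1 else (0::real))" for s
    using assms finite_jA by auto
  then show ?case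
    using assms finite_jS by simp
next
  case (Suc t)
  then show ?case
    using assms by (simp add: occ_Suc sum_occ_step)
qed

lemma sum_abs_diff_occ_le:
  assumes "policy \<xi>1" "policy \<xi>2" "s0 \<in> jS n S" "a0 \<in> jA n A"
    and C: "\<And>s. (\<Sum>a\<in>jA n A. \<bar>jpol n \<xi>1 s a - jpol n \<xi>2 s a\<bar>) \<le> C"
  shows "(\<Sum>s\<in>jS n S. \<Sum>a\<in>jA n A. \<bar>occ n S A P \<xi>1 t s0 a0 s a - occ n S A P \<xi>2 t s0 a0 s a\<bar>) \<le> real t * C"
proof (induction t)
  case 0
  then show ?case by simp
next
  case (Suc t)
  have "(\<Sum>s\<in>jS n S. \<Sum>a\<in>jA n A. \<bar>occ n S A P \<xi>1 (Suc t) s0 a0 s a - occ n S A P \<xi>2 (Suc t) s0 a0 s a\<bar>)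
      \<le> (\<Sum>s\<in>jS n S. \<Sum>a\<in>jA n A. \<bar>occ n S A P \<xi>1 t s0 a0 s a - occ n S A P \<xi>2 t s0 a0 s a\<bar>) + C"
    unfolding occ_Suc using assms
    by (intro sum_abs_diff_occ_step_le occ_nonneg sum_occ) auto
  with Suc.IH show ?case
    by (simp add: algebra_simps)
qed

lemma policy_softmax: "policy (softmax A \<theta>)"
  unfolding policy_def
proof (intro allI impI conjI ballI)
  fix j x assume "j < n"
  then have pos: "0 < (\<Sum>b\<in>A j. exp (\<theta> j x b))"
    using A_fin by (intro sum_pos) auto
  then show "sum (softmax A \<theta> j x) (A j) = 1"
    unfolding softmax_def by (simp add: sum_divide_distrib[symmetric])
  show "0 \<le> softmax A \<theta> j x b" for b
    unfolding softmax_def using pos by simp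
qed

lemma policy_explore:
  assumes "policy \<xi>" "0 \<le> \<epsilon>" "\<epsilon> \<le> 1"
  shows "policy (explore A \<epsilon> \<xi>)"
  unfolding policy_def
proof (intro allI impI conjI ballI)
  fix j x assume j: "j < n"
  then have "card (A j) > 0"
    using A_fin by (simp add: card_gt_0_iff)
  then show "sum (explore A \<epsilon> \<xi> j x) (A j) = 1"
    unfolding explore_def using assms j by (simp add: policy_def sum.distrib flip: sum_distrib_left)
  show "0 \<le> explore A \<epsilon> \<xi> j x b" if "b \<in> A j" for b
    unfolding explore_def using assms j that by (simp add: policy_def)
qed

lemma sum_abs_diff_explore_le:
  assumes "policy \<xi>" "0 \<le> \<epsilon>" "j < n"
  shows "(\<Sum>b\<in>A j. \<bar>explore A \<epsilon> \<xi> j x b - \<xi> j x b\<bar>) \<le> 2 * \<epsilon>"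
proof -
  have card: "card (A j) > 0"
    using A_fin[OF assms(3)] by (simp add: card_gt_0_iff)
  have "(\<Sum>b\<in>A j. \<bar>explore A \<epsilon> \<xi> j x b - \<xi> j x b\<bar>) = (\<Sum>b\<in>A j. \<bar>\<epsilon> / real (card (A j)) - \<epsilon> * \<xi> j x b\<bar>)"
    unfolding explore_def by (simp add: algebra_simps)
  also have "\<dots> \<le> (\<Sum>b\<in>A j. \<epsilon> / real (card (A j)) + \<epsilon> * \<xi> j x b)"
    using assms by (intro sum_mono abs_triangle_ineq4[THEN order.trans]) (auto simp: policy_def)
  also have "\<dots> = 2 * \<epsilon>"
    using assms card by (simp add: policy_def sum.distrib flip: sum_distrib_left)
  finally show ?thesis .
qed

lemma sum_abs_diff_jpol_le:
  assumes "policy \<xi>1" "policy \<xi>2" "\<And>j x. j < n \<Longrightarrow> (\<Sum>b\<in>A j. \<bar>\<xi>1 j x b - \<xi>2 j x b\<bar>) \<le> c"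
  shows "(\<Sum>a\<in>jA n A. \<bar>jpol n \<xi>1 s a - jpol n \<xi>2 s a\<bar>) \<le> real n * c"
proof -
  have "(\<Sum>a\<in>jA n A. \<bar>jpol n \<xi>1 s a - jpol n \<xi>2 s a\<bar>)
      \<le> (\<Sum>j\<in>agents n. \<Sum>b\<in>A j. \<bar>\<xi>1 j (s j) b - \<xi>2 j (s j) b\<bar>)"
    unfolding jpol_def jA_def using assms A_fin
    by (intro sum_abs_diff_prod_PiE_le) (auto simp: agents_def policy_def)
  also have "\<dots> \<le> real n * c"
    using sum_mono[of "agents n" _ "\<lambda>_. c"] assms(3) by (simp add: agents_def)
  finally show ?thesis .
qed

definition expected_reward ::
    "(nat \<Rightarrow> (nat \<Rightarrow> 's) \<Rightarrow> (nat \<Rightarrow> 'a) \<Rightarrow> real) \<Rightarrow> (nat \<Rightarrow> 's \<Rightarrow> 'a \<Rightarrow> real) \<Rightarrow> nat \<Rightarrow> nat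
      \<Rightarrow> (nat \<Rightarrow> 's) \<Rightarrow> (nat \<Rightarrow> 'a) \<Rightarrow> real"
  where "expected_reward r \<xi> i t s0 a0 = (\<Sum>s\<in>jS n S. \<Sum>a\<in>jA n A. occ n S A P \<xi> t s0 a0 s a * r i s a)"

lemma Qfun_eq_discounted_sum:
  "Qfun n S A P r \<gamma> \<xi> i s0 a0 = (\<Sum>t. \<gamma>^t * expected_reward r \<xi> i t s0 a0)"
  by (simp add: Qfun_def expected_reward_def)

definition others_weight ::
    "(nat \<Rightarrow> 's \<Rightarrow> 'a \<Rightarrow> real) \<Rightarrow> nat \<Rightarrow> (nat \<Rightarrow> 's) \<Rightarrow> (nat \<Rightarrow> 'a) \<Rightarrow> real"
  where "others_weight \<xi> i s a = (\<Prod>j\<in>agents n - {i}. \<xi> j (s j) (a j))"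

lemma Qbar_eq_weighted_sum:
  "Qbar n S A P r \<gamma> \<xi> i s ai = (\<Sum>a\<in>{a \<in> jA n A. a i = ai}. others_weight \<xi> i s a * Qfun n S A P r \<gamma> \<xi> i s a)"
  by (simp add: Qbar_def others_weight_def)

lemma actions_fixing_eq_PiE:
  assumes "i < n" "ai \<in> A i"
  shows "{a \<in> jA n A. a i = ai} = PiE (agents n) (A(i := {ai}))"
  using assms by (auto simp: jA_def PiE_iff agents_def extensional_def split: if_splits)

text \<open>With agent i's factor set to 1, the weights form a product distribution on the actions with
  a_i fixed, so the product-distribution lemmas above apply.\<close>
lemma others_weight_eq_prod:
  assumes "i < n"
  shows "others_weight \<xi> i s a = (\<Prod>j\<in>agents n. if j = i then 1 else \<xi> j (s j) (a j))"
proof -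
  have "i \<in> agents n" "finite (agents n)"
    using assms by (auto simp: agents_def)
  then show ?thesis
    unfolding others_weight_def by (auto simp: prod.remove[of "agents n" i] intro!: prod.cong)
qed

lemma others_weight_nonneg: "policy \<xi> \<Longrightarrow> a \<in> jA n A \<Longrightarrow> 0 \<le> others_weight \<xi> i s a"
  unfolding others_weight_def policy_def jA_def agents_def by (auto intro!: prod_nonneg simp: PiE_iff)

lemma sum_others_weight:
  assumes "policy \<xi>" "i < n" "ai \<in> A i"
  shows "(\<Sum>a\<in>{a \<in> jA n A. a i = ai}. others_weight \<xi> i s a) = 1"
  unfolding actions_fixing_eq_PiE[OF assms(2,3)] others_weight_eq_prod[OF assms(2)]
  using assms A_fin by (subst prod_sum_PiE[symmetric]) (auto simp: agents_def policy_def intro!: prod.neutral)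

lemma sum_abs_diff_others_weight_le:
  assumes "policy \<xi>1" "policy \<xi>2" "i < n" "ai \<in> A i"
    and c: "\<And>j x. j < n \<Longrightarrow> (\<Sum>b\<in>A j. \<bar>\<xi>1 j x b - \<xi>2 j x b\<bar>) \<le> c"
  shows "(\<Sum>a\<in>{a \<in> jA n A. a i = ai}. \<bar>others_weight \<xi>1 i s a - others_weight \<xi>2 i s a\<bar>) \<le> real n * c"
proof -
  have "0 \<le> c"
    using c[OF assms(3)] by (meson order.trans sum_nonneg abs_ge_zero)
  have "(\<Sum>a\<in>{a \<in> jA n A. a i = ai}. \<bar>others_weight \<xi>1 i s a - others_weight \<xi>2 i s a\<bar>)
      \<le> (\<Sum>j\<in>agents n. \<Sum>b\<in>(A(i := {ai})) j.
           \<bar>(if j = i then 1 else \<xi>1 j (s j) b) - (if j = i then 1 else \<xi>2 j (s j) b)\<bar>)"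
    unfolding actions_fixing_eq_PiE[OF assms(3,4)] others_weight_eq_prod[OF assms(3)]
    using assms A_fin by (intro sum_abs_diff_prod_PiE_le) (auto simp: agents_def policy_def)
  also have "\<dots> \<le> (\<Sum>j\<in>agents n. c)"
    using c \<open>0 \<le> c\<close> by (intro sum_mono) (auto simp: agents_def)
  also have "\<dots> = real n * c"
    by (simp add: agents_def)
  finally show ?thesis .
qed

context
  fixes r :: "nat \<Rightarrow> (nat \<Rightarrow> 's) \<Rightarrow> (nat \<Rightarrow> 'a) \<Rightarrow> real" and i :: nat
  assumes r_range: "\<And>s a. s \<in> jS n S \<Longrightarrow> a \<in> jA n A \<Longrightarrow> 0 \<le> r i s a \<and> r i s a \<le> 1"
begin

lemma expected_reward_bounds:
  assumes "policy \<xi>" "s0 \<in> jS n S" "a0 \<in> jA n A"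
  shows "0 \<le> expected_reward r \<xi> i t s0 a0 \<and> expected_reward r \<xi> i t s0 a0 \<le> 1"
proof
  show "0 \<le> expected_reward r \<xi> i t s0 a0"
    unfolding expected_reward_def using assms r_range occ_nonneg
    by (intro sum_nonneg mult_nonneg_nonneg) auto
  have "expected_reward r \<xi> i t s0 a0 \<le> (\<Sum>s\<in>jS n S. \<Sum>a\<in>jA n A. occ n S A P \<xi> t s0 a0 s a)"
    unfolding expected_reward_def using assms r_range occ_nonneg
    by (intro sum_mono mult_left_le) auto
  then show "expected_reward r \<xi> i t s0 a0 \<le> 1"
    using sum_occ[OF assms] by simp
qed

lemma abs_diff_expected_reward_le:
  "\<bar>expected_reward r \<xi>1 i t s0 a0 - expected_reward r \<xi>2 i t s0 a0\<bar>
     \<le> (\<Sum>s\<in>jS n S. \<Sum>a\<in>jA n A. \<bar>occ n S A P \<xi>1 t s0 a0 s a - occ n S A P \<xi>2 t s0 a0 s a\<bar>)"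
proof -
  let ?d = "\<lambda>s a. occ n S A P \<xi>1 t s0 a0 s a - occ n S A P \<xi>2 t s0 a0 s a"
  have "\<bar>expected_reward r \<xi>1 i t s0 a0 - expected_reward r \<xi>2 i t s0 a0\<bar>
      = \<bar>\<Sum>s\<in>jS n S. \<Sum>a\<in>jA n A. ?d s a * r i s a\<bar>"
    by (simp add: expected_reward_def flip: sum_subtractf left_diff_distrib)
  also have "\<dots> \<le> (\<Sum>s\<in>jS n S. \<Sum>a\<in>jA n A. \<bar>?d s a * r i s a\<bar>)"
    by (rule order.trans[OF sum_abs sum_mono[OF sum_abs]])
  also have "\<dots> \<le> (\<Sum>s\<in>jS n S. \<Sum>a\<in>jA n A. \<bar>?d s a\<bar>)"
    using r_range by (intro sum_mono) (auto simp: abs_mult intro: mult_right_le_one_le)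
  finally show ?thesis .
qed

lemma Qfun_bounds:
  assumes "policy \<xi>" "s0 \<in> jS n S" "a0 \<in> jA n A" "0 \<le> \<gamma>" "\<gamma> < 1"
  shows "summable (\<lambda>t. \<gamma>^t * expected_reward r \<xi> i t s0 a0)"
    and "0 \<le> Qfun n S A P r \<gamma> \<xi> i s0 a0" "Qfun n S A P r \<gamma> \<xi> i s0 a0 \<le> 1 / (1 - \<gamma>)"
  unfolding Qfun_eq_discounted_sum
  using discounted_sum_bounds[OF assms(4,5) expected_reward_bounds[OF assms(1-3)]] by simp_all

lemma abs_diff_Qfun_le:
  assumes "policy \<xi>1" "policy \<xi>2" "s0 \<in> jS n S" "a0 \<in> jA n A" "0 \<le> \<gamma>" "\<gamma> < 1"
    and C: "\<And>s. (\<Sum>a\<in>jA n A. \<bar>jpol n \<xi>1 s a - jpol n \<xi>2 s a\<bar>) \<le> C"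
  shows "\<bar>Qfun n S A P r \<gamma> \<xi>1 i s0 a0 - Qfun n S A P r \<gamma> \<xi>2 i s0 a0\<bar> \<le> C / (1 - \<gamma>)^2"
  unfolding Qfun_eq_discounted_sum
proof (rule discounted_sum_diff_le)
  have "0 \<le> C"
    using C[of undefined] by (meson order.trans sum_nonneg abs_ge_zero)
  then show "\<bar>expected_reward r \<xi>1 i t s0 a0 - expected_reward r \<xi>2 i t s0 a0\<bar> \<le> real (Suc t) * C" for t
    using abs_diff_expected_reward_le sum_abs_diff_occ_le[OF assms(1-4) C, of t]
    by (meson mult_right_mono of_nat_le_iff le_SucI order.refl order.trans)
qed (use assms Qfun_bounds(1) in auto)

lemma abs_diff_Qbar_le:
  assumes "policy \<xi>1" "policy \<xi>2" "i < n" "s \<in> jS n S" "ai \<in> A i" "0 \<le> \<gamma>" "\<gamma> < 1"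
    and c: "\<And>j x. j < n \<Longrightarrow> (\<Sum>b\<in>A j. \<bar>\<xi>1 j x b - \<xi>2 j x b\<bar>) \<le> c"
  shows "\<bar>Qbar n S A P r \<gamma> \<xi>1 i s ai - Qbar n S A P r \<gamma> \<xi>2 i s ai\<bar> \<le> 2 * real n * c / (1 - \<gamma>)^2"
proof -
  have "0 \<le> c"
    using c[OF assms(3)] by (meson order.trans sum_nonneg abs_ge_zero)
  have "\<bar>Qbar n S A P r \<gamma> \<xi>1 i s ai - Qbar n S A P r \<gamma> \<xi>2 i s ai\<bar>
      \<le> real n * c / (1 - \<gamma>)^2
         + 1 / (1 - \<gamma>) * (\<Sum>a\<in>{a \<in> jA n A. a i = ai}. \<bar>others_weight \<xi>1 i s a - others_weight \<xi>2 i s a\<bar>)"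
    unfolding Qbar_eq_weighted_sum using assms
    by (intro abs_diff_weighted_sum_le)
      (auto intro: others_weight_nonneg sum_others_weight Qfun_bounds abs_diff_Qfun_le sum_abs_diff_jpol_le)
  also have "\<dots> \<le> real n * c / (1 - \<gamma>)^2 + 1 / (1 - \<gamma>)^2 * (real n * c)"
  proof -
    have "1 / (1 - \<gamma>) \<le> 1 / (1 - \<gamma>)^2"
      using assms(6,7) by (intro divide_left_mono) (auto simp: power2_eq_square mult_left_le)
    then show ?thesis
      using assms sum_abs_diff_others_weight_le[OF assms(1-3,5) c] \<open>0 \<le> c\<close>
      by (intro add_left_mono mult_mono) auto
  qed
  finally show ?thesis
    by (simp add: field_simps)
qed

end

end

theorem mainTheorem15:
  fixes n :: nat and E :: "nat \<Rightarrow> nat \<Rightarrow> bool"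
    and S :: "nat \<Rightarrow> 's set" and A :: "nat \<Rightarrow> 'a set"
    and P :: "nat \<Rightarrow> (nat \<Rightarrow> 's) \<Rightarrow> 'a \<Rightarrow> 's \<Rightarrow> real"
    and r :: "nat \<Rightarrow> (nat \<Rightarrow> 's) \<Rightarrow> (nat \<Rightarrow> 'a) \<Rightarrow> real"
    and \<kappa>r :: nat and \<gamma> \<epsilon> :: real and \<theta> :: "nat \<Rightarrow> 's \<Rightarrow> 'a \<Rightarrow> real" and i :: nat
  assumes E_sym: "\<And>x y. E x y \<Longrightarrow> E y x"
    and S_fin: "\<And>j. j < n \<Longrightarrow> finite (S j) \<and> S j \<noteq> {}"
    and A_fin: "\<And>j. j < n \<Longrightarrow> finite (A j) \<and> A j \<noteq> {}"
    and P_nonneg: "\<And>j s b x. j < n \<Longrightarrow> s \<in> jS n S \<Longrightarrow> b \<in> A j \<Longrightarrow> x \<in> S j \<Longrightarrow> P j s b x \<ge> 0"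
    and P_sum: "\<And>j s b. j < n \<Longrightarrow> s \<in> jS n S \<Longrightarrow> b \<in> A j \<Longrightarrow> (\<Sum>x\<in>S j. P j s b x) = 1"
    and P_local: "\<And>j s s' b x. j < n \<Longrightarrow> s \<in> jS n S \<Longrightarrow> s' \<in> jS n S
        \<Longrightarrow> (\<forall>k\<in>nbhd n E 1 j. s k = s' k) \<Longrightarrow> P j s b x = P j s' b x"
    and r_range: "\<And>j s a. j < n \<Longrightarrow> s \<in> jS n S \<Longrightarrow> a \<in> jA n A \<Longrightarrow> 0 \<le> r j s a \<and> r j s a \<le> 1"
    and r_local: "\<And>j s s' a a'. j < n \<Longrightarrow> s \<in> jS n S \<Longrightarrow> s' \<in> jS n S \<Longrightarrow> a \<in> jA n A \<Longrightarrow> a' \<in> jA n A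
        \<Longrightarrow> (\<forall>k\<in>nbhd n E \<kappa>r j. s k = s' k \<and> a k = a' k) \<Longrightarrow> r j s a = r j s' a'"
    and gamma: "0 < \<gamma>" "\<gamma> < 1"
    and eps: "0 \<le> \<epsilon>" "\<epsilon> \<le> 1"
    and i: "i < n"
  shows "\<forall>s\<in>jS n S. \<forall>ai\<in>A i.
           \<bar>Qbar n S A P r \<gamma> (explore A \<epsilon> (softmax A \<theta>)) i s ai
             - Qbar n S A P r \<gamma> (softmax A \<theta>) i s ai\<bar>
           \<le> 6 * real n * \<epsilon> / (1 - \<gamma>)\<^sup>2"
proof (intro ballI)
  fix s ai assume s: "s \<in> jS n S" and ai: "ai \<in> A i"
  interpret finite_markov_game n S A P
    using S_fin A_fin P_nonneg P_sum by unfold_locales auto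
  have softmax: "policy (softmax A \<theta>)"
    by (rule policy_softmax)
  then have explore: "policy (explore A \<epsilon> (softmax A \<theta>))"
    using eps by (rule policy_explore)
  have "\<bar>Qbar n S A P r \<gamma> (explore A \<epsilon> (softmax A \<theta>)) i s ai - Qbar n S A P r \<gamma> (softmax A \<theta>) i s ai\<bar>
      \<le> 2 * real n * (2 * \<epsilon>) / (1 - \<gamma>)^2"
    using r_range[OF i] explore softmax i s ai gamma sum_abs_diff_explore_le[OF softmax eps(1)]
    by (intro abs_diff_Qbar_le) auto
  also have "\<dots> \<le> 6 * real n * \<epsilon> / (1 - \<gamma>)\<^sup>2"
    using eps by (intro divide_right_mono) auto
  finally show "\<bar>Qbar n S A P r \<gamma> (explore A \<epsilon> (softmax A \<theta>)) i s ai - Qbar n S A P r \<gamma> (softmax A \<theta>) i s ai\<bar>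
      \<le> 6 * real n * \<epsilon> / (1 - \<gamma>)\<^sup>2" .
qed

end
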